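(* If $a,b>0$ and $1<q<p$, then for every $\lambda>0$ the function $u=0$ is a strict local minimizer of $I_{\lambda,s}$ in $X_p^s$.
   Context: $\Omega\subset\mathbb{R}^N$ bounded smooth domain, $s\in(0,1)$, $p>1$, $N>sp$, $p_s^*=\frac{Np}{N-sp}$. $X_p^s=\{u\in W^{s,p}(\mathbb{R}^N): u=0 \text{ a.e. in } \mathbb{R}^N\setminus\Omega\}$ with norm $\|u\|_{X_p^s}=\big(\int_{\mathbb{R}^{2N}}\frac{|u(x)-u(y)|^p}{|x-y|^{N+sp}}dxdy\big)^{1/p}$. $I_{\lambda,s}(u)=\frac1p\|u\|_{X_p^s}^p+\frac{\lambda}{q}\int_\Omega|u|^q-\frac ap\int_\Omega|u|^p-\frac{b}{p_s^*}\int_\Omega(u^+)^{p_s^*}$, where $u^+=\max\{u,0\}$. *)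

theory Defs
  imports "HOL-Analysis.Analysis"
begin

fun Ck :: "nat \<Rightarrow> ('a::euclidean_space \<Rightarrow> real) \<Rightarrow> bool" where
  "Ck 0 f = continuous_on UNIV f"
| "Ck (Suc k) f = ((\<forall>x. f differentiable (at x)) \<and>
                    (\<forall>v. Ck k (\<lambda>x. frechet_derivative f (at x) v)))"

definition smooth_fun :: "('a::euclidean_space \<Rightarrow> real) \<Rightarrow> bool" where
  "smooth_fun f \<longleftrightarrow> (\<forall>k. Ck k f)"

definition smooth_domain :: "'a::euclidean_space set \<Rightarrow> bool" where
  "smooth_domain \<Omega> \<longleftrightarrow> open \<Omega> \<and> connected \<Omega> \<and> \<Omega> \<noteq> {} \<and>
     (\<forall>x\<in>frontier \<Omega>. \<exists>r>0. \<exists>\<phi>. smooth_fun \<phi> \<and>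
        (\<forall>y\<in>ball x r. \<exists>v. frechet_derivative \<phi> (at y) v \<noteq> 0) \<and>
        \<Omega> \<inter> ball x r = {y\<in>ball x r. \<phi> y < 0})"

definition gagliardo :: "real \<Rightarrow> real \<Rightarrow> ('a::euclidean_space \<Rightarrow> real) \<Rightarrow> ennreal" where
  "gagliardo s p u = (\<integral>\<^sup>+ z. ennreal (\<bar>u (fst z) - u (snd z)\<bar> powr p /
        norm (fst z - snd z) powr (real DIM('a) + s * p)) \<partial>(lborel :: ('a \<times> 'a) measure))"

definition Wsp :: "real \<Rightarrow> real \<Rightarrow> ('a::euclidean_space \<Rightarrow> real) set" where
  "Wsp s p = {u. u \<in> borel_measurable lebesgue \<and>
                 integrable lebesgue (\<lambda>x. \<bar>u x\<bar> powr p) \<and> gagliardo s p u < \<infinity>}"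

definition Xsp :: "'a::euclidean_space set \<Rightarrow> real \<Rightarrow> real \<Rightarrow> ('a \<Rightarrow> real) set" where
  "Xsp \<Omega> s p = {u \<in> Wsp s p. AE x in lebesgue. x \<notin> \<Omega> \<longrightarrow> u x = 0}"

definition Xnorm :: "real \<Rightarrow> real \<Rightarrow> ('a::euclidean_space \<Rightarrow> real) \<Rightarrow> real" where
  "Xnorm s p u = enn2real (gagliardo s p u) powr (1 / p)"

definition crit_exp :: "nat \<Rightarrow> real \<Rightarrow> real \<Rightarrow> real" where
  "crit_exp N s p = real N * p / (real N - s * p)"

definition I_fun :: "'a::euclidean_space set \<Rightarrow> real \<Rightarrow> real \<Rightarrow> real \<Rightarrow> real \<Rightarrow> real
                     \<Rightarrow> real \<Rightarrow> ('a \<Rightarrow> real) \<Rightarrow> real" where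
  "I_fun \<Omega> s p q a b lam u =
     1 / p * Xnorm s p u powr p
     + lam / q * (LINT x:\<Omega>|lebesgue. \<bar>u x\<bar> powr q)
     - a / p * (LINT x:\<Omega>|lebesgue. \<bar>u x\<bar> powr p)
     - b / crit_exp DIM('a) s p * (LINT x:\<Omega>|lebesgue. max (u x) 0 powr crit_exp DIM('a) s p)"

definition strict_local_min_X :: "'a::euclidean_space set \<Rightarrow> real \<Rightarrow> real \<Rightarrow>
     (('a \<Rightarrow> real) \<Rightarrow> real) \<Rightarrow> ('a \<Rightarrow> real) \<Rightarrow> bool" where
  "strict_local_min_X \<Omega> s p J u \<longleftrightarrow> u \<in> Xsp \<Omega> s p \<and>
     (\<exists>\<delta>>0. \<forall>v\<in>Xsp \<Omega> s p. 0 < Xnorm s p (\<lambda>x. v x - u x) \<and> Xnorm s p (\<lambda>x. v x - u x) < \<delta>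
        \<longrightarrow> J u < J v)"

end

(* If |w x| = 2A, every y in the ball B(x,r) has |w x - w y| >= A or |w y| >= A, so
   |B(x,r)| <= r^(N+sp) A^(-p) g(x) + A^(-P) J, where g(x) is the inner Gagliardo integral
   at x, J is the integral of |w|^P and P = Np/(N-sp). Optimising over r gives
   |w x|^P <= c J^(sp/N) g(x); integrating in x yields the fractional Sobolev inequality
   J^(p/P) <= c [w]^p, first for truncations of w (where J is finite), then for w itself by
   monotone convergence.
   With it, (a/p) int |u|^p is absorbed by (lam/q) int |u|^q up to a multiple of int |u|^P,
   so I(u) >= ||u||^p / p - K ||u||^P, which is positive for small ||u|| > 0 since P > p. *)

theory Submission
  imports Defs
begin

lemma powr_le_eps_mult_powr_add:
  fixes k \<epsilon> p q P :: real
  assumes "0 < k" and "0 < \<epsilon>" and "q < p" and "p < P"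
  obtains C where "0 < C" and "\<And>z. 0 \<le> z \<Longrightarrow> k * z powr p \<le> \<epsilon> * z powr q + C * z powr P"
proof
  define K where "K = (\<epsilon> / k) powr (1 / (p - q))"
  have K: "0 < K" and K_eps: "k * K powr (p - q) = \<epsilon>"
    using assms by (simp_all add: K_def powr_powr)
  show "0 < k * K powr (p - P)" using K assms by simp
  fix z :: real assume z: "0 \<le> z"
  show "k * z powr p \<le> \<epsilon> * z powr q + k * K powr (p - P) * z powr P"
  proof (cases "z = 0")
    case False
    with z have z: "0 < z" by simp
    show ?thesis
    proof (cases "z \<le> K")
      case True
      have "k * z powr p = k * z powr (p - q) * z powr q" using z by (simp add: powr_add[symmetric])
      also have "\<dots> \<le> \<epsilon> * z powr q"
        unfolding K_eps[symmetric] using True z assms by (intro mult_right_mono mult_left_mono powr_mono2) auto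
      moreover have "0 \<le> k * K powr (p - P) * z powr P" using assms(1) by simp
      ultimately show ?thesis by linarith
    next
      case False
      have "k * z powr p = k * z powr (p - P) * z powr P" using z by (simp add: powr_add[symmetric])
      also have "\<dots> \<le> k * K powr (p - P) * z powr P"
        using False K assms by (intro mult_right_mono mult_left_mono powr_mono2') auto
      moreover have "0 \<le> \<epsilon> * z powr q" using assms(2) by simp
      ultimately show ?thesis by linarith
    qed
  qed simp
qed

lemma powr_le_one_plus_powr:
  fixes z q p :: real
  assumes "0 \<le> z" and "0 \<le> q" and "q \<le> p"
  shows "z powr q \<le> 1 + z powr p"
proof (cases "z \<le> 1")
  case True
  then have "z powr q \<le> 1" using assms by (intro powr_le1) auto
  then show ?thesis by (simp add: add_increasing2)
next
  case False
  then have "z powr q \<le> z powr p" using assms by (intro powr_mono) auto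
  then show ?thesis by simp
qed

lemma optimal_radius_bound:
  fixes \<omega> J G \<theta> :: real
  assumes "0 < \<omega>" and "0 < J"
    and le: "\<And>\<rho>. 0 < \<rho> \<Longrightarrow> \<omega> * \<rho> \<le> \<rho> powr (1 + \<theta>) * G + J"
  shows "(\<omega> / 2) powr (1 + \<theta>) \<le> J powr \<theta> * G"
proof -
  define \<rho> where "\<rho> = 2 * J / \<omega>"
  have \<rho>: "0 < \<rho>" and J_eq: "J = \<omega> * \<rho> / 2" using assms by (simp_all add: \<rho>_def)
  from le[OF \<rho>] have "\<omega> * \<rho> / 2 \<le> \<rho> powr (1 + \<theta>) * G" by (simp add: J_eq)
  then have "\<rho> * (\<omega> / 2) \<le> \<rho> * (\<rho> powr \<theta> * G)"
    using \<rho> by (simp add: powr_add algebra_simps)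
  then have "\<omega> / 2 \<le> \<rho> powr \<theta> * G" using \<rho> by simp
  then have "(\<omega> / 2) * (\<omega> / 2) powr \<theta> \<le> (\<omega> / 2) powr \<theta> * (\<rho> powr \<theta> * G)"
    using assms(1) by (subst mult.commute) (intro mult_left_mono, auto)
  also have "(\<omega> / 2) powr \<theta> * (\<rho> powr \<theta> * G) = J powr \<theta> * G"
    using assms \<rho> by (simp add: powr_mult[symmetric] J_eq mult.assoc)
  finally show ?thesis using assms(1) by (simp add: powr_add)
qed

lemma powr_minus_powr_pos_near_zero:
  fixes p P K :: real
  assumes "0 < p" and "p < P" and "0 \<le> K"
  obtains \<delta> where "0 < \<delta>" and "\<And>x. 0 < x \<Longrightarrow> x < \<delta> \<Longrightarrow> K * x powr P < x powr p / p"
proof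
  define \<delta> where "\<delta> = (1 / (p * (K + 1))) powr (1 / (P - p))"
  show "0 < \<delta>" using assms by (simp add: \<delta>_def)
  fix x :: real assume x: "0 < x" "x < \<delta>"
  have "x powr (P - p) < \<delta> powr (P - p)" using x assms by (intro powr_less_mono2) auto
  also have "\<dots> = 1 / (p * (K + 1))" using assms by (simp add: \<delta>_def powr_powr)
  finally have "(K + 1) * x powr (P - p) < (K + 1) * (1 / (p * (K + 1)))"
    using assms by (intro mult_strict_left_mono) auto
  also have "\<dots> = 1 / p" using assms by simp
  finally have "K * x powr (P - p) + x powr (P - p) < 1 / p" by (simp add: distrib_right)
  moreover have "0 < x powr (P - p)" using x by simp
  ultimately have "K * x powr (P - p) < 1 / p" by linarith
  then have "x powr p * (K * x powr (P - p)) < x powr p * (1 / p)"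
    using x by (intro mult_strict_left_mono) auto
  then show "K * x powr P < x powr p / p"
    using x by (simp add: powr_diff algebra_simps)
qed

lemma crit_exp_gt:
  assumes "0 < s" and "0 < p" and "s * p < real N"
  shows "p < crit_exp N s p"
proof -
  have "0 < s * p" using assms by simp
  then have "0 < real N" using assms by linarith
  then show ?thesis using assms by (simp add: crit_exp_def field_simps)
qed

lemma crit_exp_pos:
  assumes "0 < s" and "0 < p" and "s * p < real N"
  shows "0 < crit_exp N s p"
  using crit_exp_gt[OF assms] assms(2) by linarith

lemma crit_exp_eq:
  assumes "0 < s" and "0 < p" and "s * p < real N"
  shows "crit_exp N s p * (1 - s * p / real N) = p"
proof -
  have "0 < s * p" using assms by simp
  then have "0 < real N" using assms by linarith
  then show ?thesis using assms by (simp add: crit_exp_def field_simps)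
qed

definition gagliardo_slice :: "real \<Rightarrow> real \<Rightarrow> ('a::euclidean_space \<Rightarrow> real) \<Rightarrow> 'a \<Rightarrow> ennreal" where
  "gagliardo_slice s p u x = (\<integral>\<^sup>+ y. ennreal (\<bar>u x - u y\<bar> powr p /
        norm (x - y) powr (real DIM('a) + s * p)) \<partial>lborel)"

lemma gagliardo_eq_nn_integral_slice:
  fixes u :: "'a::euclidean_space \<Rightarrow> real"
  assumes [measurable]: "u \<in> borel_measurable lborel"
  shows "gagliardo s p u = (\<integral>\<^sup>+ x. gagliardo_slice s p u x \<partial>lborel)"
  unfolding gagliardo_def gagliardo_slice_def lborel_prod[symmetric]
  by (subst lborel.nn_integral_fst[symmetric]) simp_all

lemma emeasure_ball_le_slice:
  fixes w :: "'a::euclidean_space \<Rightarrow> real"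
  assumes [measurable]: "w \<in> borel_measurable lborel"
    and "0 \<le> s" and "0 < p" and "0 < P" and A: "0 < A" "2 * A \<le> \<bar>w x\<bar>" and "0 < r"
  shows "emeasure lborel (ball x r)
    \<le> ennreal (r powr (real DIM('a) + s * p) / A powr p) * gagliardo_slice s p w x
      + ennreal (1 / A powr P) * (\<integral>\<^sup>+ y. ennreal (\<bar>w y\<bar> powr P) \<partial>lborel)"
proof -
  define c where "c = r powr (real DIM('a) + s * p) / A powr p"
  define F where "F y = \<bar>w x - w y\<bar> powr p / norm (x - y) powr (real DIM('a) + s * p)" for y
  define G where "G y = \<bar>w y\<bar> powr P / A powr P" for y
  have "1 \<le> c * F y + G y" if y: "y \<in> ball x r" for y
  proof -
    have "A \<le> \<bar>w x - w y\<bar> \<or> A \<le> \<bar>w y\<bar>" using A by linarith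
    then show ?thesis
    proof
      assume *: "A \<le> \<bar>w x - w y\<bar>"
      then have "y \<noteq> x" using A by auto
      then have d: "0 < norm (x - y)" "norm (x - y) < r" using y by (auto simp: dist_norm)
      have "A powr p * norm (x - y) powr (real DIM('a) + s * p)
          \<le> \<bar>w x - w y\<bar> powr p * r powr (real DIM('a) + s * p)"
        using * d assms by (intro mult_mono powr_mono2) auto
      then have "1 \<le> c * F y"
        using d A by (simp add: c_def F_def field_simps)
      moreover have "0 \<le> G y" by (simp add: G_def)
      ultimately show ?thesis by linarith
    next
      assume "A \<le> \<bar>w y\<bar>"
      then have "A powr P \<le> \<bar>w y\<bar> powr P" using assms by (intro powr_mono2) auto
      then have "1 \<le> G y" using A by (simp add: G_def)
      moreover have "0 \<le> c * F y" by (simp add: c_def F_def)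
      ultimately show ?thesis by linarith
    qed
  qed
  then have "indicator (ball x r) y \<le> ennreal c * ennreal (F y) + ennreal (G y)" for y
    by (cases "y \<in> ball x r")
      (auto simp: c_def F_def G_def ennreal_mult[symmetric] ennreal_plus[symmetric] simp del: ennreal_plus)
  then have "(\<integral>\<^sup>+ y. indicator (ball x r) y \<partial>lborel)
      \<le> (\<integral>\<^sup>+ y. ennreal c * ennreal (F y) + ennreal (G y) \<partial>lborel)"
    by (intro nn_integral_mono)
  then have "emeasure lborel (ball x r) \<le> (\<integral>\<^sup>+ y. ennreal c * ennreal (F y) + ennreal (G y) \<partial>lborel)"
    by simp
  also have "\<dots> = ennreal c * gagliardo_slice s p w x + (\<integral>\<^sup>+ y. ennreal (G y) \<partial>lborel)"
    by (simp add: nn_integral_add nn_integral_cmult F_def G_def gagliardo_slice_def)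
  also have "(\<integral>\<^sup>+ y. ennreal (G y) \<partial>lborel) = ennreal (1 / A powr P) * (\<integral>\<^sup>+ y. ennreal (\<bar>w y\<bar> powr P) \<partial>lborel)"
    by (simp add: G_def nn_integral_cmult[symmetric] ennreal_mult[symmetric] divide_inverse mult.commute)
  finally show ?thesis by (simp add: c_def)
qed

lemma ball_volume_le_slice:
  fixes w :: "'a::euclidean_space \<Rightarrow> real" and s p :: real
  defines "\<theta> \<equiv> s * p / real DIM('a)"
  assumes [measurable]: "w \<in> borel_measurable lborel"
    and "0 \<le> s" and "0 < p" and "0 < P" and "0 < A" and "2 * A \<le> \<bar>w x\<bar>"
    and g: "gagliardo_slice s p w x = ennreal g" and "0 \<le> g"
    and J: "(\<integral>\<^sup>+ y. ennreal (\<bar>w y\<bar> powr P) \<partial>lborel) = ennreal J" and "0 \<le> J"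
    and "0 < \<rho>"
  shows "unit_ball_vol (real DIM('a)) * \<rho> \<le> \<rho> powr (1 + \<theta>) * (g / A powr p) + J / A powr P"
proof -
  define r where "r = \<rho> powr (1 / real DIM('a))"
  have r: "0 < r" using \<open>0 < \<rho>\<close> by (simp add: r_def)
  have "r ^ DIM('a) = \<rho>" using \<open>0 < \<rho>\<close> by (simp add: r_def powr_realpow[symmetric] powr_powr)
  moreover have "r powr (real DIM('a) + s * p) = \<rho> powr (1 + \<theta>)"
    using \<open>0 < \<rho>\<close> by (simp add: r_def powr_powr \<theta>_def field_simps)
  ultimately have "ennreal (unit_ball_vol (real DIM('a)) * \<rho>)
      \<le> ennreal (\<rho> powr (1 + \<theta>) / A powr p) * ennreal g + ennreal (1 / A powr P) * ennreal J"
    using emeasure_ball_le_slice[where w=w and x=x and r=r and A=A and P=P and s=s and p=p]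
      emeasure_ball[where c=x and r=r] assms r
    by simp
  also have "\<dots> = ennreal (\<rho> powr (1 + \<theta>) * (g / A powr p) + J / A powr P)"
    using assms by (simp add: ennreal_mult[symmetric] ennreal_plus[symmetric] del: ennreal_plus)
  finally show ?thesis using assms by (subst (asm) ennreal_le_iff) auto
qed

definition frac_sobolev_const :: "nat \<Rightarrow> real \<Rightarrow> real \<Rightarrow> real" where
  "frac_sobolev_const N s p =
     2 powr crit_exp N s p * (2 / unit_ball_vol (real N)) powr (1 + s * p / real N)"

lemma frac_sobolev_const_pos: "0 < frac_sobolev_const N s p"
proof -
  have "unit_ball_vol (real N) \<noteq> 0" using unit_ball_vol_pos[of "real N"] by linarith
  then show ?thesis by (simp add: frac_sobolev_const_def)
qed

lemma abs_powr_crit_exp_le_slice: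
  fixes w :: "'a::euclidean_space \<Rightarrow> real" and s p :: real
  defines "P \<equiv> crit_exp DIM('a) s p" and "\<theta> \<equiv> s * p / real DIM('a)"
  assumes [measurable]: "w \<in> borel_measurable lborel"
    and "0 < s" and "0 < p" and "s * p < real DIM('a)"
    and J: "(\<integral>\<^sup>+ y. ennreal (\<bar>w y\<bar> powr P) \<partial>lborel) = ennreal J" and "0 < J"
  shows "ennreal (\<bar>w x\<bar> powr P)
    \<le> ennreal (frac_sobolev_const DIM('a) s p * J powr \<theta>) * gagliardo_slice s p w x"
proof -
  define \<omega> where "\<omega> = unit_ball_vol (real DIM('a))"
  define c where "c = frac_sobolev_const DIM('a) s p"
  have \<omega>: "0 < \<omega>" and c: "0 < c"
    by (simp_all add: \<omega>_def c_def frac_sobolev_const_pos)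
  have P: "0 < P" and exp_P: "P * \<theta> + p = P"
    using crit_exp_pos[of s p] crit_exp_eq[of s p] assms
    by (simp_all add: P_def \<theta>_def algebra_simps)
  consider "w x = 0" | "gagliardo_slice s p w x = \<infinity>"
    | g where "gagliardo_slice s p w x = ennreal g" "0 \<le> g" "w x \<noteq> 0"
    by (cases "gagliardo_slice s p w x") auto
  then show ?thesis
  proof cases
    case 1
    then show ?thesis using P by simp
  next
    case 2
    then show ?thesis using c \<open>0 < J\<close> by (simp add: c_def ennreal_mult_top)
  next
    case (3 g)
    define A where "A = \<bar>w x\<bar> / 2"
    have A: "0 < A" using 3 by (simp add: A_def)
    have "\<omega> * \<rho> \<le> \<rho> powr (1 + \<theta>) * (g / A powr p) + J / A powr P" if "0 < \<rho>" for \<rho>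
      using ball_volume_le_slice[where w=w and x=x and g=g and J=J and \<rho>=\<rho> and A=A and P=P and s=s and p=p]
        assms A 3 P that
      by (simp add: A_def \<omega>_def P_def \<theta>_def)
    from optimal_radius_bound[OF \<omega> _ this]
    have "(\<omega> / 2) powr (1 + \<theta>) \<le> (J / A powr P) powr \<theta> * (g / A powr p)"
      using \<open>0 < J\<close> A by simp
    also have "\<dots> = J powr \<theta> * g / A powr P"
      using A \<open>0 < J\<close> exp_P
      by (simp add: powr_divide powr_powr powr_add[symmetric] mult.commute add.commute)
    finally have "A powr P \<le> (2 / \<omega>) powr (1 + \<theta>) * J powr \<theta> * g"
      using A \<omega> by (simp add: powr_divide field_simps)
    then have "2 powr P * A powr P \<le> 2 powr P * ((2 / \<omega>) powr (1 + \<theta>) * J powr \<theta> * g)"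
      by simp
    then have "\<bar>w x\<bar> powr P \<le> c * J powr \<theta> * g"
      by (simp add: A_def c_def frac_sobolev_const_def \<omega>_def P_def \<theta>_def powr_divide mult.assoc)
    then have "ennreal (\<bar>w x\<bar> powr P) \<le> ennreal (c * J powr \<theta> * g)"
      by (rule ennreal_leI)
    then show ?thesis using 3 c by (simp add: c_def ennreal_mult)
  qed
qed

lemma fractional_sobolev_finite:
  fixes w :: "'a::euclidean_space \<Rightarrow> real" and s p :: real
  defines "P \<equiv> crit_exp DIM('a) s p"
  assumes [measurable]: "w \<in> borel_measurable lborel"
    and "0 < s" and "0 < p" and "s * p < real DIM('a)"
    and J: "(\<integral>\<^sup>+ y. ennreal (\<bar>w y\<bar> powr P) \<partial>lborel) = ennreal J" and "0 \<le> J"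
  shows "ennreal (J powr (p / P)) \<le> ennreal (frac_sobolev_const DIM('a) s p) * gagliardo s p w"
proof -
  define \<theta> where "\<theta> = s * p / real DIM('a)"
  define c where "c = frac_sobolev_const DIM('a) s p"
  have c: "0 < c" by (simp add: c_def frac_sobolev_const_pos)
  have P: "0 < P" and exp_P: "P * (1 - \<theta>) = p"
    using crit_exp_pos[of s p] crit_exp_eq[of s p] assms by (simp_all add: P_def \<theta>_def)
  consider "J = 0" | "gagliardo s p w = \<infinity>" | G where "gagliardo s p w = ennreal G" "0 \<le> G" "0 < J"
    using \<open>0 \<le> J\<close> by (cases "gagliardo s p w") force+
  then show ?thesis
  proof cases
    case 1
    then show ?thesis by simp
  next
    case 2
    then show ?thesis using c by (simp add: c_def ennreal_mult_top)
  next
    case (3 G)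
    have "ennreal J \<le> (\<integral>\<^sup>+ x. ennreal (c * J powr \<theta>) * gagliardo_slice s p w x \<partial>lborel)"
      unfolding J[symmetric] c_def \<theta>_def P_def
      using abs_powr_crit_exp_le_slice[OF assms(2-5) J[unfolded P_def]] 3 by (intro nn_integral_mono) auto
    also have "\<dots> = ennreal (c * J powr \<theta>) * gagliardo s p w"
      by (simp add: gagliardo_eq_nn_integral_slice nn_integral_cmult gagliardo_slice_def)
    also have "\<dots> = ennreal (J powr \<theta> * (c * G))"
      using 3 c by (simp add: ennreal_mult[symmetric] algebra_simps)
    finally have "J powr \<theta> * J powr (1 - \<theta>) \<le> J powr \<theta> * (c * G)"
      using 3 c by (simp add: powr_add[symmetric] ennreal_le_iff)
    then have "J powr (1 - \<theta>) \<le> c * G" using 3 by simp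
    moreover have "1 - \<theta> = p / P" using exp_P P by (simp add: field_simps)
    ultimately have "ennreal (J powr (p / P)) \<le> ennreal (c * G)" by (simp add: ennreal_leI)
    then show ?thesis using 3 c by (simp add: c_def ennreal_mult)
  qed
qed

lemma gagliardo_cong_AE:
  assumes "AE x in lborel. u x = v x"
  shows "gagliardo s p u = gagliardo s p v"
proof -
  from assms obtain B where "{x \<in> space lborel. u x \<noteq> v x} \<subseteq> B" "emeasure lborel B = 0" "B \<in> sets lborel"
    by (rule AE_E)
  then have B: "B \<in> null_sets lborel" "{x. u x \<noteq> v x} \<subseteq> B" by (auto intro: null_setsI)
  then have "B \<times> UNIV \<union> UNIV \<times> B \<in> null_sets (lborel \<Otimes>\<^sub>M lborel :: ('a \<times> 'a) measure)"
    by (intro null_sets.Un lborel.times_in_null_sets1 lborel.times_in_null_sets2) auto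
  then have "AE z in lborel \<Otimes>\<^sub>M lborel. u (fst z) = v (fst z) \<and> u (snd z) = v (snd z)"
    by (rule AE_I') (use B in auto)
  then show ?thesis
    unfolding gagliardo_def lborel_prod[symmetric] by (rule nn_integral_cong_AE[OF eventually_mono]) auto
qed

lemma gagliardo_truncation_le:
  fixes v :: "'a::euclidean_space \<Rightarrow> real"
  assumes "0 \<le> p"
  shows "gagliardo s p (\<lambda>x. min \<bar>v x\<bar> m) \<le> gagliardo s p v"
proof -
  have "\<bar>min \<bar>v x\<bar> m - min \<bar>v y\<bar> m\<bar> powr p \<le> \<bar>v x - v y\<bar> powr p" for x y
    using assms by (intro powr_mono2) (auto simp: min_def abs_if)
  then show ?thesis
    unfolding gagliardo_def by (intro nn_integral_mono ennreal_leI divide_right_mono) auto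
qed

lemma fractional_sobolev_borel:
  fixes v :: "'a::euclidean_space \<Rightarrow> real" and s p :: real
  defines "P \<equiv> crit_exp DIM('a) s p" and "c \<equiv> frac_sobolev_const DIM('a) s p"
  assumes "bounded \<Omega>" and [measurable]: "\<Omega> \<in> sets lborel"
    and "0 < s" and "0 < p" and "s * p < real DIM('a)"
    and [measurable]: "v \<in> borel_measurable lborel" and supp: "AE x in lborel. x \<notin> \<Omega> \<longrightarrow> v x = 0"
    and G: "gagliardo s p v = ennreal G" and "0 \<le> G"
  shows "(\<integral>\<^sup>+ x. ennreal (\<bar>v x\<bar> powr P) \<partial>lborel) \<le> ennreal ((c * G) powr (P / p))"
proof -
  define w where "w n = (\<lambda>x. min \<bar>v x\<bar> (real n))" for n
  have P: "0 < P" using crit_exp_pos[of s p] assms by (simp add: P_def)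
  have [measurable]: "w n \<in> borel_measurable lborel" for n unfolding w_def by measurable
  have bound: "(\<integral>\<^sup>+ x. ennreal (\<bar>w n x\<bar> powr P) \<partial>lborel) \<le> ennreal ((c * G) powr (P / p))" for n
  proof -
    have "AE x in lborel. ennreal (\<bar>w n x\<bar> powr P) \<le> ennreal (real n powr P) * indicator \<Omega> x"
      using supp
    proof eventually_elim
      case (elim x)
      have "\<bar>w n x\<bar> powr P \<le> real n powr P" using P by (intro powr_mono2) (auto simp: w_def)
      then have "ennreal (\<bar>w n x\<bar> powr P) \<le> ennreal (real n powr P)" by (rule ennreal_leI)
      then show ?case using elim by (cases "x \<in> \<Omega>") (simp_all add: w_def)
    qed
    then have "(\<integral>\<^sup>+ x. ennreal (\<bar>w n x\<bar> powr P) \<partial>lborel)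
        \<le> (\<integral>\<^sup>+ x. ennreal (real n powr P) * indicator \<Omega> x \<partial>lborel)"
      by (rule nn_integral_mono_AE)
    also have "\<dots> = ennreal (real n powr P) * emeasure lborel \<Omega>"
      by (rule nn_integral_cmult_indicator) measurable
    also have "\<dots> < \<infinity>"
      using emeasure_bounded_finite[OF \<open>bounded \<Omega>\<close>] by (simp add: ennreal_mult_less_top)
    finally obtain J where J: "(\<integral>\<^sup>+ x. ennreal (\<bar>w n x\<bar> powr P) \<partial>lborel) = ennreal J" "0 \<le> J"
      by (auto simp: less_top_ennreal)
    have "ennreal (J powr (p / P)) \<le> ennreal c * gagliardo s p (w n)"
      using fractional_sobolev_finite[of "w n" s p J] J assms by (simp add: w_def P_def c_def)
    also have "\<dots> \<le> ennreal c * ennreal G"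
      using gagliardo_truncation_le[of p s v "real n"] G assms by (intro mult_left_mono) (auto simp: w_def)
    also have "\<dots> = ennreal (c * G)"
      using \<open>0 \<le> G\<close> frac_sobolev_const_pos[of "DIM('a)" s p] by (simp add: c_def ennreal_mult)
    finally have "J powr (p / P) \<le> c * G"
      using \<open>0 \<le> G\<close> frac_sobolev_const_pos[of "DIM('a)" s p] by (simp add: c_def ennreal_le_iff)
    then have "(J powr (p / P)) powr (P / p) \<le> (c * G) powr (P / p)"
      using assms P by (intro powr_mono2) auto
    then show ?thesis using J P assms by (simp add: powr_powr ennreal_leI)
  qed
  have sup: "ennreal (\<bar>v x\<bar> powr P) = (SUP n. ennreal (\<bar>w n x\<bar> powr P))" for x
  proof (rule antisym)
    obtain n where "\<bar>v x\<bar> \<le> real n" using real_arch_simple by blast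
    then show "ennreal (\<bar>v x\<bar> powr P) \<le> (SUP n. ennreal (\<bar>w n x\<bar> powr P))"
      by (intro SUP_upper2[of n]) (auto simp: w_def)
    show "(SUP n. ennreal (\<bar>w n x\<bar> powr P)) \<le> ennreal (\<bar>v x\<bar> powr P)"
      using P by (intro SUP_least ennreal_leI powr_mono2) (auto simp: w_def)
  qed
  have inc: "incseq (\<lambda>n x. ennreal (\<bar>w n x\<bar> powr P))"
    using P by (intro incseq_SucI le_funI ennreal_leI powr_mono2) (auto simp: w_def)
  have "(\<integral>\<^sup>+ x. ennreal (\<bar>v x\<bar> powr P) \<partial>lborel)
      = (\<integral>\<^sup>+ x. (SUP n. ennreal (\<bar>w n x\<bar> powr P)) \<partial>lborel)"
    by (rule nn_integral_cong) (rule sup)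
  also have "\<dots> = (SUP n. \<integral>\<^sup>+ x. ennreal (\<bar>w n x\<bar> powr P) \<partial>lborel)"
    by (rule nn_integral_monotone_convergence_SUP[OF inc]) (unfold w_def, measurable)
  also have "\<dots> \<le> ennreal ((c * G) powr (P / p))"
    by (rule SUP_least) (rule bound)
  finally show ?thesis .
qed

lemma fractional_sobolev:
  fixes u :: "'a::euclidean_space \<Rightarrow> real" and s p :: real
  defines "P \<equiv> crit_exp DIM('a) s p"
  assumes "bounded \<Omega>" and "\<Omega> \<in> sets lborel" and "0 < s" and "0 < p" and "s * p < real DIM('a)"
    and u: "u \<in> borel_measurable lebesgue" and supp: "AE x in lebesgue. x \<notin> \<Omega> \<longrightarrow> u x = 0"
    and fin: "gagliardo s p u < \<infinity>"
  shows "(\<integral>\<^sup>+ x. ennreal (\<bar>u x\<bar> powr P) \<partial>lebesgue)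
    \<le> ennreal ((frac_sobolev_const DIM('a) s p * enn2real (gagliardo s p u)) powr (P / p))"
proof -
  obtain v where [measurable]: "v \<in> borel_measurable lborel" and uv: "AE x in lborel. u x = v x"
    using completion_ex_borel_measurable_real[OF u] by blast
  have "gagliardo s p v = ennreal (enn2real (gagliardo s p u))"
    using gagliardo_cong_AE[OF uv] fin by simp
  moreover have "AE x in lborel. x \<notin> \<Omega> \<longrightarrow> v x = 0"
    using supp uv unfolding AE_completion_iff by eventually_elim auto
  ultimately have "(\<integral>\<^sup>+ x. ennreal (\<bar>v x\<bar> powr P) \<partial>lborel)
      \<le> ennreal ((frac_sobolev_const DIM('a) s p * enn2real (gagliardo s p u)) powr (P / p))"
    using fractional_sobolev_borel[of \<Omega> s p v] assms by (simp add: P_def)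
  moreover have "(\<integral>\<^sup>+ x. ennreal (\<bar>u x\<bar> powr P) \<partial>lebesgue) = (\<integral>\<^sup>+ x. ennreal (\<bar>v x\<bar> powr P) \<partial>lborel)"
    unfolding nn_integral_completion using uv by (intro nn_integral_cong_AE) auto
  ultimately show ?thesis by simp
qed

lemma Xnorm_powr:
  assumes "0 < p" and "gagliardo s p u < \<infinity>"
  shows "Xnorm s p u powr p = enn2real (gagliardo s p u)"
  using assms by (simp add: Xnorm_def powr_powr)

lemma Xsp_set_integrable_powr:
  fixes v :: "'a::euclidean_space \<Rightarrow> real"
  assumes "bounded \<Omega>" and "\<Omega> \<in> sets lborel" and "v \<in> Xsp \<Omega> s p" and "0 \<le> q" and "q \<le> p"
  shows "set_integrable lebesgue \<Omega> (\<lambda>x. \<bar>v x\<bar> powr q)"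
proof (rule set_integrable_bound)
  have \<Omega>_leb: "\<Omega> \<in> sets lebesgue" using assms(2) by (rule sets_completionI_sets)
  have [measurable]: "v \<in> borel_measurable lebesgue" and int_p: "integrable lebesgue (\<lambda>x. \<bar>v x\<bar> powr p)"
    using assms(3) by (auto simp: Xsp_def Wsp_def)
  have "set_integrable lebesgue \<Omega> (\<lambda>x. \<bar>v x\<bar> powr p)"
    using integrable_mult_indicator[OF \<Omega>_leb int_p] unfolding set_integrable_def by simp
  moreover have "set_integrable lebesgue \<Omega> (\<lambda>x. 1 :: real)"
    using emeasure_bounded_finite[OF assms(1)] assms(2)
    by (simp add: set_integrable_def integrable_indicator_iff emeasure_completion less_top)
  ultimately show "set_integrable lebesgue \<Omega> (\<lambda>x. 1 + \<bar>v x\<bar> powr p)"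
    by (rule set_integral_add(1)[rotated])
  show "AE x in lebesgue. x \<in> \<Omega> \<longrightarrow> norm (\<bar>v x\<bar> powr q) \<le> norm (1 + \<bar>v x\<bar> powr p)"
    using assms by (intro AE_I2) (simp add: powr_le_one_plus_powr)
  show "set_borel_measurable lebesgue \<Omega> (\<lambda>x. \<bar>v x\<bar> powr q)"
    using \<Omega>_leb by (simp add: set_borel_measurable_def)
qed

lemma Xsp_integral_crit_exp_le:
  fixes v :: "'a::euclidean_space \<Rightarrow> real" and s p :: real
  defines "P \<equiv> crit_exp DIM('a) s p"
  assumes "bounded \<Omega>" and "\<Omega> \<in> sets lborel"
    and "0 < s" and "0 < p" and "s * p < real DIM('a)" and "v \<in> Xsp \<Omega> s p"
  shows "integrable lebesgue (\<lambda>x. \<bar>v x\<bar> powr P)"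
    and "(LINT x|lebesgue. \<bar>v x\<bar> powr P)
      \<le> frac_sobolev_const DIM('a) s p powr (P / p) * Xnorm s p v powr P"
proof -
  have [measurable]: "v \<in> borel_measurable lebesgue" and fin: "gagliardo s p v < \<infinity>"
    and supp: "AE x in lebesgue. x \<notin> \<Omega> \<longrightarrow> v x = 0"
    using assms(7) by (auto simp: Xsp_def Wsp_def)
  define X where "X = Xnorm s p v"
  define S where "S = frac_sobolev_const DIM('a) s p powr (P / p)"
  have "(\<integral>\<^sup>+ x. ennreal (\<bar>v x\<bar> powr P) \<partial>lebesgue)
      \<le> ennreal ((frac_sobolev_const DIM('a) s p * X powr p) powr (P / p))"
    using fractional_sobolev[of \<Omega> s p v] Xnorm_powr[OF \<open>0 < p\<close> fin] assms fin supp
    by (simp add: X_def P_def)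
  also have "\<dots> = ennreal (S * X powr P)"
    using \<open>0 < p\<close> frac_sobolev_const_pos[of "DIM('a)" s p]
    by (simp add: S_def X_def Xnorm_def powr_mult powr_powr)
  finally have sob: "(\<integral>\<^sup>+ x. ennreal (\<bar>v x\<bar> powr P) \<partial>lebesgue) \<le> ennreal (S * X powr P)" .
  then show "integrable lebesgue (\<lambda>x. \<bar>v x\<bar> powr P)"
    by (intro integrableI_bounded) (auto simp: top.not_eq_extremum intro: le_less_trans)
  show "(LINT x|lebesgue. \<bar>v x\<bar> powr P) \<le> S * X powr P"
    using sob by (simp add: integral_eq_nn_integral S_def enn2real_leI)
qed

lemma I_fun_lower_bound:
  fixes \<Omega> :: "'a::euclidean_space set" and s p q a b lam C :: real
  defines "P \<equiv> crit_exp DIM('a) s p"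
  assumes "bounded \<Omega>" and \<Omega>: "\<Omega> \<in> sets lborel"
    and "0 < s" and "0 < p" and "s * p < real DIM('a)" and "0 \<le> q" and "q \<le> p" and "0 \<le> b" and "0 \<le> C"
    and absorb: "\<And>z. 0 \<le> z \<Longrightarrow> a / p * z powr p \<le> lam / q * z powr q + C * z powr P"
    and v: "v \<in> Xsp \<Omega> s p"
  shows "Xnorm s p v powr p / p
      - (C + b / P) * frac_sobolev_const DIM('a) s p powr (P / p) * Xnorm s p v powr P
    \<le> I_fun \<Omega> s p q a b lam v"
proof -
  have \<Omega>_leb: "\<Omega> \<in> sets lebesgue" using \<Omega> by (rule sets_completionI_sets)
  have P: "0 < P" using crit_exp_pos[of s p] assms by (simp add: P_def)
  have int_P: "integrable lebesgue (\<lambda>x. \<bar>v x\<bar> powr P)"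
    and LP_le: "(LINT x|lebesgue. \<bar>v x\<bar> powr P)
      \<le> frac_sobolev_const DIM('a) s p powr (P / p) * Xnorm s p v powr P"
    using Xsp_integral_crit_exp_le[OF assms(2-6) v] by (simp_all add: P_def)
  have int_P_\<Omega>: "set_integrable lebesgue \<Omega> (\<lambda>x. \<bar>v x\<bar> powr P)"
    using integrable_mult_indicator[OF \<Omega>_leb int_P] by (simp add: set_integrable_def)
  have LP_\<Omega>_le: "(LINT x:\<Omega>|lebesgue. \<bar>v x\<bar> powr P) \<le> (LINT x|lebesgue. \<bar>v x\<bar> powr P)"
    unfolding set_lebesgue_integral_def using integrable_mult_indicator[OF \<Omega>_leb int_P] int_P
    by (intro integral_mono) (auto simp: indicator_def)
  have int_p_\<Omega>: "set_integrable lebesgue \<Omega> (\<lambda>x. \<bar>v x\<bar> powr p)"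
    and int_q_\<Omega>: "set_integrable lebesgue \<Omega> (\<lambda>x. \<bar>v x\<bar> powr q)"
    using Xsp_set_integrable_powr[OF assms(2,3) v] assms by auto
  have int_max_\<Omega>: "set_integrable lebesgue \<Omega> (\<lambda>x. max (v x) 0 powr P)"
    using int_P_\<Omega> v P \<Omega>_leb
    by (rule_tac set_integrable_bound)
      (auto simp: set_borel_measurable_def Xsp_def Wsp_def intro!: AE_I2 powr_mono2)
  have "a / p * \<bar>v x\<bar> powr p + b / P * max (v x) 0 powr P
      \<le> lam / q * \<bar>v x\<bar> powr q + (C + b / P) * \<bar>v x\<bar> powr P" for x
  proof -
    have "max (v x) 0 powr P \<le> \<bar>v x\<bar> powr P" using P by (intro powr_mono2) auto
    then have "b / P * max (v x) 0 powr P \<le> b / P * \<bar>v x\<bar> powr P"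
      using \<open>0 \<le> b\<close> P by (intro mult_left_mono) auto
    then show ?thesis using absorb[of "\<bar>v x\<bar>"] by (simp add: algebra_simps)
  qed
  then have "(LINT x:\<Omega>|lebesgue. a / p * \<bar>v x\<bar> powr p + b / P * max (v x) 0 powr P)
      \<le> (LINT x:\<Omega>|lebesgue. lam / q * \<bar>v x\<bar> powr q + (C + b / P) * \<bar>v x\<bar> powr P)"
    using int_p_\<Omega> int_P_\<Omega> int_q_\<Omega> int_max_\<Omega> by (intro set_integral_mono) auto
  then have "a / p * (LINT x:\<Omega>|lebesgue. \<bar>v x\<bar> powr p) + b / P * (LINT x:\<Omega>|lebesgue. max (v x) 0 powr P)
      \<le> lam / q * (LINT x:\<Omega>|lebesgue. \<bar>v x\<bar> powr q) + (C + b / P) * (LINT x:\<Omega>|lebesgue. \<bar>v x\<bar> powr P)"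
    using int_p_\<Omega> int_P_\<Omega> int_q_\<Omega> int_max_\<Omega> by simp
  moreover have "(C + b / P) * (LINT x:\<Omega>|lebesgue. \<bar>v x\<bar> powr P)
      \<le> (C + b / P) * (frac_sobolev_const DIM('a) s p powr (P / p) * Xnorm s p v powr P)"
    using LP_\<Omega>_le LP_le P \<open>0 \<le> b\<close> \<open>0 \<le> C\<close> by (intro mult_left_mono) auto
  ultimately show ?thesis
    by (simp add: I_fun_def P_def algebra_simps)
qed

theorem lemma4p4:
  fixes \<Omega> :: "'a::euclidean_space set" and s p q a b lam :: real
  assumes "smooth_domain \<Omega>" and "bounded \<Omega>"
    and "0 < s" and "s < 1" and "1 < p" and "real DIM('a) > s * p"
    and "0 < a" and "0 < b" and "1 < q" and "q < p" and "0 < lam"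
  shows "strict_local_min_X \<Omega> s p (I_fun \<Omega> s p q a b lam) (\<lambda>x. 0)"
proof -
  define P where "P = crit_exp DIM('a) s p"
  define S where "S = frac_sobolev_const DIM('a) s p powr (P / p)"
  have \<Omega>: "\<Omega> \<in> sets lborel" using assms(1) by (simp add: smooth_domain_def borel_open)
  have "p < P" using crit_exp_gt[of s p] assms by (simp add: P_def)
  obtain C where "0 < C"
    and absorb: "\<And>z. 0 \<le> z \<Longrightarrow> a / p * z powr p \<le> lam / q * z powr q + C * z powr P"
    using powr_le_eps_mult_powr_add[of "a / p" "lam / q" q p P] assms \<open>p < P\<close> by auto
  obtain \<delta> where "0 < \<delta>"
    and small: "\<And>x. 0 < x \<Longrightarrow> x < \<delta> \<Longrightarrow> (C + b / P) * S * x powr P < x powr p / p"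
    using powr_minus_powr_pos_near_zero[of p P "(C + b / P) * S"] assms \<open>0 < C\<close> \<open>p < P\<close>
    by (auto simp: S_def)
  have "0 < I_fun \<Omega> s p q a b lam v"
    if "v \<in> Xsp \<Omega> s p" and "0 < Xnorm s p v" and "Xnorm s p v < \<delta>" for v
  proof -
    have "Xnorm s p v powr p / p - (C + b / P) * S * Xnorm s p v powr P
        \<le> I_fun \<Omega> s p q a b lam v"
      using I_fun_lower_bound[OF assms(2) \<Omega>, where C = C] absorb that assms \<open>0 < C\<close>
      by (simp add: P_def S_def)
    with small[OF that(2,3)] show ?thesis by linarith
  qed
  moreover have "I_fun \<Omega> s p q a b lam (\<lambda>x. 0) = 0"
    by (simp add: I_fun_def Xnorm_def gagliardo_def)
  moreover have "(\<lambda>x. 0) \<in> Xsp \<Omega> s p" by (simp add: Xsp_def Wsp_def gagliardo_def)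
  ultimately show ?thesis
    unfolding strict_local_min_X_def using \<open>0 < \<delta>\<close> by auto
qed

end
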